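(* Let $m\ge 3$ and $n\ge 5$ be integers, let $\Gamma=C_m\Box C_n$ with vertex set $\{0,\dots,m-1\}\times\{0,\dots,n-1\}$, and let $S$ be a disjunctive dominating set of $\Gamma$ whose column sequence $x_0,\dots,x_{n-1}$ (where $x_j=|S\cap\{(i,j):0\le i\le m-1\}|$) is proper, i.e. $x_0>0$ and $x_{n-1}=0$. Decompose $x_0,\dots,x_{n-1}$ into its blocks $X_0,\dots,X_{e-1}$, where each block is a maximal run of consecutive terms consisting of $p_i\ge1$ positive terms followed by $q_i\ge 1$ zero terms. Then $q_i\le 3$ for every $i=0,\dots,e-1$.
   Context: $C_k$ denotes the cycle with vertex set $\{0,\dots,k-1\}$, where $i,j$ are adjacent iff $i-j\equiv\pm1\pmod k$. $G\Box H$ is the Cartesian product: vertex set $V(G)\times V(H)$, with $(g,h)\sim(g',h')$ iff either $g=g'$ and $hh'\in E(H)$, or $h=h'$ and $gg'\in E(G)$. For a graph $\Gamma$ and vertex $v$, $\Gamma(v)$ is the set of vertices at distance $1$ from $v$ and $\Gamma_2(v)$ the set at distance exactly $2$. A set $S\subseteq V(\Gamma)$ is a disjunctive dominating set if every vertex $v\notin S$ satisfies $|\Gamma(v)\cap S|\ge 1$ or $|\Gamma_2(v)\cap S|\ge 2$. Blocks: for a sequence with $x_0>0$ and $x_{n-1}=0$, write it uniquely as a concatenation $X_0X_1\cdots X_{e-1}$ where $X_i=(x_{k_i+1},\dots,x_{k_i+p_i},x_{k_i+p_i+1},\dots,x_{k_i+p_i+q_i})$ with $x_{k_i+1},\dots,x_{k_i+p_i}>0$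 and $x_{k_i+p_i+1}=\dots=x_{k_i+p_i+q_i}=0$, $p_i,q_i\ge1$. *)

theory Defs
  imports Main
begin

definition cyc_adj :: "nat \<Rightarrow> nat \<Rightarrow> nat \<Rightarrow> bool" where
  "cyc_adj k i j \<longleftrightarrow> i < k \<and> j < k \<and> ((i + 1) mod k = j \<or> (j + 1) mod k = i)"

definition torus_V :: "nat \<Rightarrow> nat \<Rightarrow> (nat \<times> nat) set" where
  "torus_V m n = {0..<m} \<times> {0..<n}"

definition torus_adj :: "nat \<Rightarrow> nat \<Rightarrow> nat \<times> nat \<Rightarrow> nat \<times> nat \<Rightarrow> bool" where
  "torus_adj m n u v \<longleftrightarrow> u \<in> torus_V m n \<and> v \<in> torus_V m n \<and>
     ((fst u = fst v \<and> cyc_adj n (snd u) (snd v)) \<or> (snd u = snd v \<and> cyc_adj m (fst u) (fst v)))"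

definition torus_N1 :: "nat \<Rightarrow> nat \<Rightarrow> nat \<times> nat \<Rightarrow> (nat \<times> nat) set" where
  "torus_N1 m n v = {u \<in> torus_V m n. torus_adj m n v u}"

definition torus_N2 :: "nat \<Rightarrow> nat \<Rightarrow> nat \<times> nat \<Rightarrow> (nat \<times> nat) set" where
  "torus_N2 m n v = {u \<in> torus_V m n. u \<noteq> v \<and> \<not> torus_adj m n v u \<and>
      (\<exists>w. torus_adj m n v w \<and> torus_adj m n w u)}"

definition disj_dom :: "nat \<Rightarrow> nat \<Rightarrow> (nat \<times> nat) set \<Rightarrow> bool" where
  "disj_dom m n S \<longleftrightarrow> S \<subseteq> torus_V m n \<and>
     (\<forall>v \<in> torus_V m n - S. card (torus_N1 m n v \<inter> S) \<ge> 1 \<or> card (torus_N2 m n v \<inter> S) \<ge> 2)"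

definition col_seq :: "nat \<Rightarrow> (nat \<times> nat) set \<Rightarrow> nat \<Rightarrow> nat" where
  "col_seq m S j = card (S \<inter> ({0..<m} \<times> {j}))"

text \<open>A block decomposition of x_0..x_{n-1}: list of pairs (p_i, q_i), block i starts at
  k_i = sum of (p_l + q_l) for l < i, has p_i positive terms then q_i zero terms,
  p_i, q_i \<ge> 1, and the blocks exactly cover positions 0..n-1.\<close>
definition block_start :: "(nat \<times> nat) list \<Rightarrow> nat \<Rightarrow> nat" where
  "block_start B i = (\<Sum>l<i. fst (B ! l) + snd (B ! l))"

definition is_block_decomp :: "(nat \<Rightarrow> nat) \<Rightarrow> nat \<Rightarrow> (nat \<times> nat) list \<Rightarrow> bool" where
  "is_block_decomp x n B \<longleftrightarrow>
     block_start B (length B) = n \<and>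
     (\<forall>i < length B. fst (B ! i) \<ge> 1 \<and> snd (B ! i) \<ge> 1 \<and>
        (\<forall>t. 1 \<le> t \<and> t \<le> fst (B ! i) \<longrightarrow> x (block_start B i + t - 1) > 0) \<and>
        (\<forall>t. fst (B ! i) < t \<and> t \<le> fst (B ! i) + snd (B ! i) \<longrightarrow> x (block_start B i + t - 1) = 0))"

end

theory Submission
  imports Defs
begin

text \<open>Suppose a block ends with at least four zero terms, in columns \<open>c, \<dots>, c + 3\<close>. Since
  the block starts with a positive term, \<open>c \<ge> 1\<close>, and \<open>c + 3 \<le> n - 1\<close>, so no wrap-around
  of \<open>C\<^sub>n\<close> is involved. The vertex \<open>(0, c + 1)\<close> is not in \<open>S\<close> and has no neighbour in \<open>S\<close>, as
  its neighbours lie in columns \<open>c, c + 1, c + 2\<close>. Its vertices at distance two lie in columns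
  \<open>c - 1, \<dots>, c + 3\<close>, and the only one outside the empty columns is \<open>(0, c - 1)\<close>; so it is
  not disjunctively dominated.\<close>

lemma cyc_adj_interior:
  assumes "cyc_adj n a b" "0 < a" "a + 1 < n"
  shows "b = a - 1 \<or> b = a + 1"
proof -
  have "b < n" "(a + 1) mod n = b \<or> (b + 1) mod n = a"
    using assms(1) unfolding cyc_adj_def by auto
  then show ?thesis
    using assms(2,3) by (auto split: if_splits simp: mod_if)
qed

lemma torus_adj_interior:
  assumes "torus_adj m n v w" "0 < snd v" "snd v + 1 < n"
  shows "(snd w = snd v - 1 \<or> snd w = snd v \<or> snd w = snd v + 1) \<and>
    (snd w \<noteq> snd v \<longrightarrow> fst w = fst v)"
  using assms cyc_adj_interior[of n "snd v" "snd w"] unfolding torus_adj_def by auto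

lemma col_seq_eq_0_iff:
  assumes "S \<subseteq> torus_V m n"
  shows "col_seq m S j = 0 \<longleftrightarrow> (\<forall>u \<in> S. snd u \<noteq> j)"
proof -
  have "finite (S \<inter> ({0..<m} \<times> {j}))" by simp
  moreover have "S \<inter> ({0..<m} \<times> {j}) = {u \<in> S. snd u = j}"
    using assms unfolding torus_V_def by auto
  ultimately show ?thesis unfolding col_seq_def by auto
qed

lemma four_empty_columns_not_disj_dom:
  assumes "0 < m" "0 < c" "c + 3 < n"
    and empty: "\<forall>u \<in> S. snd u < c \<or> c + 3 < snd u"
  shows "\<not> disj_dom m n S"
proof
  assume dom: "disj_dom m n S"
  define v where "v = (0::nat, c + 1)"
  have v: "v \<in> torus_V m n - S"
    using assms unfolding v_def torus_V_def by auto
  have "torus_N1 m n v \<inter> S = {}"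
  proof -
    have "u \<notin> S" if "torus_adj m n v u" for u
    proof -
      have "c \<le> snd u \<and> snd u \<le> c + 2"
        using torus_adj_interior[OF that] assms(3) unfolding v_def by auto
      then show ?thesis using empty by auto
    qed
    then show ?thesis unfolding torus_N1_def by auto
  qed
  moreover have "torus_N2 m n v \<inter> S \<subseteq> {(0, c - 1)}"
  proof
    fix u assume u: "u \<in> torus_N2 m n v \<inter> S"
    then obtain w where vw: "torus_adj m n v w" and wu: "torus_adj m n w u"
      unfolding torus_N2_def by auto
    have w: "(snd w = c \<or> snd w = c + 1 \<or> snd w = c + 2) \<and> (snd w \<noteq> c + 1 \<longrightarrow> fst w = 0)"
      using torus_adj_interior[OF vw] assms(3) unfolding v_def by auto
    have u_near_w: "(snd u = snd w - 1 \<or> snd u = snd w \<or> snd u = snd w + 1) \<and>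
        (snd u \<noteq> snd w \<longrightarrow> fst u = fst w)"
      using torus_adj_interior[OF wu] w assms(2,3) by auto
    have "snd u < c \<or> c + 3 < snd u" using u empty by auto
    then have "snd u = c - 1 \<and> fst u = 0" using w u_near_w assms(2) by auto
    then show "u \<in> {(0, c - 1)}" by (cases u) auto
  qed
  then have "card (torus_N2 m n v \<inter> S) \<le> 1"
    using card_mono[of "{(0, c - 1)}"] by simp
  moreover have "card (torus_N1 m n v \<inter> S) \<ge> 1 \<or> card (torus_N2 m n v \<inter> S) \<ge> 2"
    using dom v unfolding disj_dom_def by blast
  ultimately show False by simp
qed

lemma block_decomp_zero_run:
  assumes "is_block_decomp x n B" "i < length B" "k < snd (B ! i)"
  shows "x (block_start B i + fst (B ! i) + k) = 0"
proof -
  have "\<forall>t. fst (B ! i) < t \<and> t \<le> fst (B ! i) + snd (B ! i) \<longrightarrow>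
      x (block_start B i + t - 1) = 0"
    using assms(1,2) unfolding is_block_decomp_def by blast
  from this[rule_format, of "fst (B ! i) + k + 1"] show ?thesis
    using assms(3) by (simp add: add.assoc)
qed

lemma block_decomp_end_le:
  assumes "is_block_decomp x n B" "i < length B"
  shows "block_start B i + fst (B ! i) + snd (B ! i) \<le> n"
proof -
  have "block_start B i + fst (B ! i) + snd (B ! i) = block_start B (Suc i)"
    unfolding block_start_def by simp
  also have "\<dots> \<le> block_start B (length B)"
    unfolding block_start_def using assms(2) by (intro sum_mono2) auto
  finally show ?thesis
    using assms(1) unfolding is_block_decomp_def by simp
qed

theorem lemma2:
  fixes m n :: nat and S :: "(nat \<times> nat) set" and B :: "(nat \<times> nat) list"
  assumes "m \<ge> 3" and "n \<ge> 5"
    and "disj_dom m n S"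
    and "col_seq m S 0 > 0" and "col_seq m S (n - 1) = 0"
    and "is_block_decomp (col_seq m S) n B"
  shows "\<forall>i < length B. snd (B ! i) \<le> 3"
proof (intro allI impI)
  fix i assume i: "i < length B"
  define c where "c = block_start B i + fst (B ! i)"
  have "0 < c"
    using assms(6) i unfolding is_block_decomp_def c_def by fastforce
  show "snd (B ! i) \<le> 3"
  proof (rule ccontr)
    assume long: "\<not> snd (B ! i) \<le> 3"
    then have "c + 3 < n"
      using block_decomp_end_le[OF assms(6) i] unfolding c_def by linarith
    have "S \<subseteq> torus_V m n"
      using assms(3) unfolding disj_dom_def by simp
    moreover have "col_seq m S j = 0" if "c \<le> j" "j \<le> c + 3" for j
      using block_decomp_zero_run[OF assms(6) i, of "j - c"] long that
      unfolding c_def by simp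
    ultimately have "\<forall>u \<in> S. snd u < c \<or> c + 3 < snd u"
      using col_seq_eq_0_iff by (metis not_le)
    then show False
      using four_empty_columns_not_disj_dom \<open>0 < c\<close> \<open>c + 3 < n\<close> assms(1,3) by simp
  qed
qed

end
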